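(* Let $H=(V,E)$ be a 3-uniform hypergraph and let real numbers $\gamma_a$ ($a\in V$) satisfy $\gamma_a+\gamma_b+\gamma_c=-1$ for every edge $\{a,b,c\}\in E$ (e.g. $\gamma_a=\langle\mathbf v_a,\mathbf v_\emptyset\rangle$ for a feasible solution of the SDP: unit vectors $\mathbf v_a$, $a\in V\cup\{\emptyset\}$, with $\mathbf v_a+\mathbf v_b+\mathbf v_c=-\mathbf v_\emptyset$ for every edge). Define $\ell_0=-1$, $u_0=1$ and for $j\ge0$: if $j$ is even, $\ell_{j+1}=\ell_j$, $u_{j+1}=\frac{\ell_j+u_j}{2}$; if $j$ is odd, $\ell_{j+1}=\frac{\ell_j+u_j}{2}$, $u_{j+1}=u_j$; let $I_j=[\ell_j,u_j]$ and $S_{j+1}=\{a\in V:\gamma_a\in I_j\setminus I_{j+1}\}$. Then for every $j\ge0$ and every edge $e\in E$ such that $\gamma_v\in I_j$ for all $v\in e$, we have $|S_{j+1}\cap e|\le1$. *)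

theory Defs
  imports Complex_Main
begin

definition three_uniform_hypergraph :: "'a set \<Rightarrow> 'a set set \<Rightarrow> bool" where
  "three_uniform_hypergraph V E \<longleftrightarrow> finite V \<and> (\<forall>e\<in>E. e \<subseteq> V \<and> card e = 3)"

fun lu :: "nat \<Rightarrow> real \<times> real" where
  "lu 0 = (-1, 1)"
| "lu (Suc j) = (let (l, u) = lu j in
      if even j then (l, (l + u) / 2) else ((l + u) / 2, u))"

definition ell :: "nat \<Rightarrow> real" where "ell j = fst (lu j)"
definition upp :: "nat \<Rightarrow> real" where "upp j = snd (lu j)"

definition Ival :: "nat \<Rightarrow> real set" where "Ival j = {ell j .. upp j}"

text \<open>S_{j+1} = {a in V. gamma a in I_j - I_{j+1}}; here S_set V gamma j denotes S_j for j >= 1.\<close>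
definition S_set :: "'a set \<Rightarrow> ('a \<Rightarrow> real) \<Rightarrow> nat \<Rightarrow> 'a set" where
  "S_set V \<gamma> j = {a \<in> V. \<gamma> a \<in> Ival (j - 1) - Ival j}"

end

theory Submission
  imports Defs
begin

text \<open>The halving scheme keeps the intervals balanced against the constraint
  \<open>\<gamma>\<^sub>a + \<gamma>\<^sub>b + \<gamma>\<^sub>c = -1\<close>: for even \<open>j\<close> we have \<open>2 \<ell>\<^sub>j + u\<^sub>j = -1\<close>, and
  for odd \<open>j\<close> we have \<open>\<ell>\<^sub>j + 2 u\<^sub>j = -1\<close>. For even \<open>j\<close> the set
  \<open>S\<^sub>j\<^sub>+\<^sub>1\<close> is the upper half of \<open>I\<^sub>j\<close>, strictly above its midpoint \<open>m\<close>; two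
  vertices of an edge there and a third one in \<open>I\<^sub>j\<close> would give a sum
  \<open>> 2m + \<ell>\<^sub>j = -1\<close>. For odd \<open>j\<close> it is the lower half, and symmetrically the
  sum would be \<open>< 2m + u\<^sub>j = -1\<close>.\<close>

lemma ell_Suc: "ell (Suc j) = (if even j then ell j else (ell j + upp j) / 2)"
  by (simp add: ell_def upp_def split_def Let_def)

lemma upp_Suc: "upp (Suc j) = (if even j then (ell j + upp j) / 2 else upp j)"
  by (simp add: ell_def upp_def split_def Let_def)

lemma ell_upp_balanced:
  "(even j \<longrightarrow> 2 * ell j + upp j = -1) \<and> (odd j \<longrightarrow> ell j + 2 * upp j = -1)"
proof (induction j)
  case 0
  show ?case by (simp add: ell_def upp_def)
next
  case (Suc j)
  then show ?case by (auto simp: ell_Suc upp_Suc field_simps)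
qed

lemma Ival_diff_Ival_Suc_even:
  assumes "even j" and "x \<in> Ival j - Ival (Suc j)"
  shows "(ell j + upp j) / 2 < x"
  using assms by (auto simp: Ival_def ell_Suc upp_Suc)

lemma Ival_diff_Ival_Suc_odd:
  assumes "odd j" and "x \<in> Ival j - Ival (Suc j)"
  shows "x < (ell j + upp j) / 2"
  using assms by (auto simp: Ival_def ell_Suc upp_Suc)

lemma sum_ne_minus_one_if_two_leave_Ival:
  assumes x: "x \<in> Ival j - Ival (Suc j)" and y: "y \<in> Ival j - Ival (Suc j)"
    and z: "z \<in> Ival j"
  shows "x + y + z \<noteq> -1"
proof (cases "even j")
  case True
  have "(ell j + upp j) / 2 < x" "(ell j + upp j) / 2 < y"
    using Ival_diff_Ival_Suc_even[OF True x] Ival_diff_Ival_Suc_even[OF True y] by simp_all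
  moreover have "ell j \<le> z" and "2 * ell j + upp j = -1"
    using z True ell_upp_balanced[of j] by (simp_all add: Ival_def)
  ultimately have "x + y + z > -1" by argo
  then show ?thesis by simp
next
  case False
  have "x < (ell j + upp j) / 2" "y < (ell j + upp j) / 2"
    using Ival_diff_Ival_Suc_odd[OF False x] Ival_diff_Ival_Suc_odd[OF False y] by simp_all
  moreover have "z \<le> upp j" and "ell j + 2 * upp j = -1"
    using z False ell_upp_balanced[of j] by (simp_all add: Ival_def)
  ultimately have "x + y + z < -1" by argo
  then show ?thesis by simp
qed

lemma sum_card_3_split:
  assumes "card e = 3" and "a \<in> e" and "b \<in> e" and "a \<noteq> b"
  obtains c where "c \<in> e" and "sum f e = f a + f b + f c"
proof -
  have "finite e"
    using assms(1) by (simp add: card_ge_0_finite)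
  with assms have "card (e - {a, b}) = 1"
    by (simp add: card_Diff_subset)
  then obtain c where "e - {a, b} = {c}"
    by (meson card_1_singletonE)
  with assms(2-4) have "e = {a, b, c}" and "c \<noteq> a" "c \<noteq> b"
    by auto
  then show ?thesis
    using assms(4) by (intro that[of c]) (simp_all add: add.assoc)
qed

theorem lemma3p4:
  fixes V :: "'a set" and E :: "'a set set" and \<gamma> :: "'a \<Rightarrow> real"
  assumes "three_uniform_hypergraph V E"
    and "\<forall>e\<in>E. (\<Sum>v\<in>e. \<gamma> v) = -1"
  shows "\<forall>j. \<forall>e\<in>E. (\<forall>v\<in>e. \<gamma> v \<in> Ival j) \<longrightarrow> card (S_set V \<gamma> (Suc j) \<inter> e) \<le> 1"
proof (intro allI ballI impI)
  fix j e
  assume "e \<in> E" and in_Ival: "\<forall>v\<in>e. \<gamma> v \<in> Ival j"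
  then have card_e: "card e = 3" and sum_e: "sum \<gamma> e = -1"
    using assms by (auto simp: three_uniform_hypergraph_def)
  have "a = b" if "a \<in> S_set V \<gamma> (Suc j) \<inter> e" and "b \<in> S_set V \<gamma> (Suc j) \<inter> e" for a b
  proof (rule ccontr)
    assume "a \<noteq> b"
    with that card_e obtain c where "c \<in> e" and "sum \<gamma> e = \<gamma> a + \<gamma> b + \<gamma> c"
      by (auto elim: sum_card_3_split)
    moreover have "\<gamma> a + \<gamma> b + \<gamma> c \<noteq> -1"
      using that in_Ival \<open>c \<in> e\<close>
      by (intro sum_ne_minus_one_if_two_leave_Ival) (auto simp: S_set_def)
    ultimately show False
      using sum_e by simp
  qed
  moreover have "finite e"
    using card_e by (simp add: card_ge_0_finite)
  ultimately show "card (S_set V \<gamma> (Suc j) \<inter> e) \<le> 1"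
    by (simp add: card_le_Suc0_iff_eq)
qed

end
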